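(* Let $\Omega\subset\mathbb{R}^n$, $n\ge1$, be bounded open with smooth boundary, $\alpha,\beta,\gamma,\kappa>0$, $0\le\tau\le1$, and let $\mathbb{B}$ be the operator on $\mathbb{H}$ described in the context. Then $$\limsup_{|\lambda|\to\infty}\|(i\lambda I-\mathbb{B})^{-1}\|_{\mathcal{L}(\mathbb{H})}<\infty,$$ where $\lambda$ ranges over real numbers with $i\lambda$ in the resolvent set of $\mathbb{B}$.
   Context: $A=-\Delta$ on $L^2(\Omega)$ with $D(A)=H^2(\Omega)\cap H^1_0(\Omega)$; $A^s$ defined by spectral calculus, $\|\cdot\|$ the $L^2(\Omega)$ norm. $\mathbb{H}=D(A)\times D(A^{\tau/2})\times L^2(\Omega)$ with norm $\|U\|_{\mathbb{H}}^2=\beta\|Au\|^2+\beta(\|v\|^2+\gamma\|A^{\tau/2}v\|^2)+\alpha\|\theta\|^2$ for $U=(u,v,\theta)$. $\mathbb{B}(u,v,\theta)=(v,(I+\gamma A^\tau)^{-1}\{-A^2u+\alpha A\theta\},-\kappa A\theta-\beta Av)$ with domain $D(\mathbb{B})=\{U\in\mathbb{H}: v\in D(A),\ -Au+\alpha\theta\in D(A^{1-\tau/2}),\ -\kappa\theta-\beta v\in D(A)\}$, where $I+\gamma A^\tau$ is understood as the isometry $D(A^{\tau/2})\to D(A^{-\tau/2})$ given by $\langle (I+\gamma A^\tau)z_1,z_2\rangle=\langle z_1,z_2\rangle+\gamma\langle A^{\tau/2}z_1,A^{\tau/2}z_2\rangle$. $\mathbb{B}$ is the generator of the semigroup associated with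 the thermoelastic plate system $u_{tt}+\gamma(-\Delta)^\tau u_{tt}+\Delta^2u+\alpha\Delta\theta=0$, $\theta_t-\kappa\Delta\theta-\beta\Delta u_t=0$ with $u=\Delta u=\theta=0$ on $\partial\Omega$. *)

theory Defs
  imports "HOL-Analysis.Analysis"
begin

text \<open>A = -Delta (Dirichlet) on L2(Omega) is unitarily equivalent,
via an orthonormal eigenbasis (e_k), to multiplication by its eigenvalue sequence mu
on coefficient sequences.  A state U = (u,v,theta) is a triple of coefficient sequences.\<close>

type_synonym state = "(nat \<Rightarrow> complex) \<times> (nat \<Rightarrow> complex) \<times> (nat \<Rightarrow> complex)"

definition eigen_seq :: "(nat \<Rightarrow> real) \<Rightarrow> bool" where
  "eigen_seq mu \<longleftrightarrow> (\<forall>k. 0 < mu k) \<and> mono mu \<and> filterlim mu at_top sequentially"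

text \<open>Summand of the squared H-norm:
  beta |A u|^2 + beta (|v|^2 + gamma |A^(tau/2) v|^2) + alpha |theta|^2.\<close>
definition Hterm :: "(nat \<Rightarrow> real) \<Rightarrow> real \<Rightarrow> real \<Rightarrow> real \<Rightarrow> real \<Rightarrow> state \<Rightarrow> nat \<Rightarrow> real" where
  "Hterm mu alpha beta gamma tau U k =
     (case U of (u, v, th) \<Rightarrow>
        beta * (mu k)\<^sup>2 * (cmod (u k))\<^sup>2
      + beta * ((cmod (v k))\<^sup>2 + gamma * (mu k) powr tau * (cmod (v k))\<^sup>2)
      + alpha * (cmod (th k))\<^sup>2)"

text \<open>Membership in H = D(A) x D(A^(tau/2)) x L2 (also requiring each component in L2).\<close>
definition inH :: "(nat \<Rightarrow> real) \<Rightarrow> real \<Rightarrow> real \<Rightarrow> real \<Rightarrow> real \<Rightarrow> state \<Rightarrow> bool" where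
  "inH mu alpha beta gamma tau U \<longleftrightarrow>
     (case U of (u, v, th) \<Rightarrow>
        summable (\<lambda>k. (cmod (u k))\<^sup>2) \<and> summable (\<lambda>k. (mu k)\<^sup>2 * (cmod (u k))\<^sup>2)
      \<and> summable (\<lambda>k. (cmod (v k))\<^sup>2) \<and> summable (\<lambda>k. (mu k) powr tau * (cmod (v k))\<^sup>2)
      \<and> summable (\<lambda>k. (cmod (th k))\<^sup>2))"

definition Hnorm :: "(nat \<Rightarrow> real) \<Rightarrow> real \<Rightarrow> real \<Rightarrow> real \<Rightarrow> real \<Rightarrow> state \<Rightarrow> real" where
  "Hnorm mu alpha beta gamma tau U = sqrt (\<Sum>k. Hterm mu alpha beta gamma tau U k)"

text \<open>The operator B(u,v,theta) = (v, (I+gamma A^tau)^{-1}(-A^2 u + alpha A theta),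
  -kappa A theta - beta A v).\<close>
definition Bop :: "(nat \<Rightarrow> real) \<Rightarrow> real \<Rightarrow> real \<Rightarrow> real \<Rightarrow> real \<Rightarrow> real \<Rightarrow> state \<Rightarrow> state" where
  "Bop mu alpha beta gamma kappa tau U =
     (case U of (u, v, th) \<Rightarrow>
       (v,
        \<lambda>k. (- (of_real ((mu k)\<^sup>2)) * u k + of_real (alpha * mu k) * th k)
              / of_real (1 + gamma * (mu k) powr tau),
        \<lambda>k. - of_real (kappa * mu k) * th k - of_real (beta * mu k) * v k))"

text \<open>D(B): U in H, v in D(A), -Au + alpha theta in D(A^(1-tau/2)), -kappa theta - beta v in D(A).\<close>
definition domB :: "(nat \<Rightarrow> real) \<Rightarrow> real \<Rightarrow> real \<Rightarrow> real \<Rightarrow> real \<Rightarrow> real \<Rightarrow> state set" where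
  "domB mu alpha beta gamma kappa tau =
     {U. inH mu alpha beta gamma tau U \<and>
        (case U of (u, v, th) \<Rightarrow>
           summable (\<lambda>k. (mu k)\<^sup>2 * (cmod (v k))\<^sup>2)
         \<and> summable (\<lambda>k. (mu k) powr (2 - tau) *
                (cmod (- of_real (mu k) * u k + of_real alpha * th k))\<^sup>2)
         \<and> summable (\<lambda>k. (mu k)\<^sup>2 *
                (cmod (- of_real kappa * th k - of_real beta * v k))\<^sup>2))}"

definition st_scale :: "complex \<Rightarrow> state \<Rightarrow> state" where
  "st_scale z U = (case U of (u, v, th) \<Rightarrow> (\<lambda>k. z * u k, \<lambda>k. z * v k, \<lambda>k. z * th k))"

definition st_diff :: "state \<Rightarrow> state \<Rightarrow> state" where
  "st_diff U W = (case U of (u, v, th) \<Rightarrow> case W of (u', v', th') \<Rightarrow>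
      (\<lambda>k. u k - u' k, \<lambda>k. v k - v' k, \<lambda>k. th k - th' k))"

definition shifted :: "(nat \<Rightarrow> real) \<Rightarrow> real \<Rightarrow> real \<Rightarrow> real \<Rightarrow> real \<Rightarrow> real \<Rightarrow> complex \<Rightarrow> state \<Rightarrow> state" where
  "shifted mu alpha beta gamma kappa tau z U =
     st_diff (st_scale z U) (Bop mu alpha beta gamma kappa tau U)"

definition resolvent_set :: "(nat \<Rightarrow> real) \<Rightarrow> real \<Rightarrow> real \<Rightarrow> real \<Rightarrow> real \<Rightarrow> real \<Rightarrow> complex set" where
  "resolvent_set mu alpha beta gamma kappa tau =
     {z. bij_betw (shifted mu alpha beta gamma kappa tau z)
                  (domB mu alpha beta gamma kappa tau) {F. inH mu alpha beta gamma tau F}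
       \<and> (\<exists>C. \<forall>U\<in>domB mu alpha beta gamma kappa tau.
             Hnorm mu alpha beta gamma tau U
               \<le> C * Hnorm mu alpha beta gamma tau (shifted mu alpha beta gamma kappa tau z U))}"

definition resolvent :: "(nat \<Rightarrow> real) \<Rightarrow> real \<Rightarrow> real \<Rightarrow> real \<Rightarrow> real \<Rightarrow> real \<Rightarrow> complex \<Rightarrow> state \<Rightarrow> state" where
  "resolvent mu alpha beta gamma kappa tau z =
     the_inv_into (domB mu alpha beta gamma kappa tau) (shifted mu alpha beta gamma kappa tau z)"

definition resolvent_norm :: "(nat \<Rightarrow> real) \<Rightarrow> real \<Rightarrow> real \<Rightarrow> real \<Rightarrow> real \<Rightarrow> real \<Rightarrow> complex \<Rightarrow> ereal" where
  "resolvent_norm mu alpha beta gamma kappa tau z =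
     (SUP F \<in> {F. inH mu alpha beta gamma tau F \<and> Hnorm mu alpha beta gamma tau F \<noteq> 0}.
        ereal (Hnorm mu alpha beta gamma tau (resolvent mu alpha beta gamma kappa tau z F)
               / Hnorm mu alpha beta gamma tau F))"

end

(*
  The spectral model decouples (i lam - B) U = F into one 3x3 system per eigenvalue m = mu k.
  In each mode three energy identities hold: Re <F, U>_H = alpha kappa m |theta|^2 (dissipation),
  and the heat equation tested against v and the plate equation tested against u.  In the
  normalized components m |u|, sqrt (1 + gamma m^tau) |v|, |theta| they bound |U|^2 by a multiple
  of |F| |U| plus a multiple of sqrt (|F| |U|) |U|, and the constants are uniform in lam and in
  m >= mu 0 because 1 + gamma m^tau grows at most linearly in m.  Absorbing the second term
  gives |U| <= C |F| in every mode, hence in H, so the resolvent is bounded by C on the whole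
  imaginary axis.
*)
theory Submission
  imports Defs
begin

lemma le_of_sq_le_absorb:
  fixes X Y A B :: real
  assumes "0 \<le> X" "0 \<le> Y" "0 \<le> A"
    and Y2: "Y\<^sup>2 \<le> A * (X * Y) + B * sqrt (X * Y) * Y"
  shows "Y \<le> (2 * A + B\<^sup>2) * X"
proof (cases "Y = 0")
  case True
  then show ?thesis using assms by simp
next
  case False
  have "Y * Y \<le> (A * X + B * sqrt X * sqrt Y) * Y"
    using Y2 by (simp add: power2_eq_square real_sqrt_mult algebra_simps)
  then have "Y \<le> A * X + B * sqrt X * sqrt Y"
    using False assms(2) by simp
  moreover have "2 * (B * sqrt X * sqrt Y) \<le> B\<^sup>2 * X + Y"
  proof -
    have "0 \<le> (B * sqrt X - sqrt Y)\<^sup>2" by simp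
    then show ?thesis using assms by (simp add: power2_eq_square algebra_simps)
  qed
  ultimately show ?thesis by (simp add: algebra_simps)
qed

lemma le_mult_of_weighted_sq_le:
  fixes c p r Y :: real
  assumes "0 \<le> c" "c * p\<^sup>2 \<le> Y\<^sup>2" "0 \<le> r" "1 \<le> c * r\<^sup>2" "0 \<le> Y"
  shows "p \<le> r * Y"
proof (rule power2_le_imp_le)
  have "p\<^sup>2 \<le> (c * r\<^sup>2) * p\<^sup>2" using assms by (simp add: mult_le_cancel_right1)
  also have "\<dots> = r\<^sup>2 * (c * p\<^sup>2)" by simp
  also have "\<dots> \<le> r\<^sup>2 * Y\<^sup>2" using assms by (intro mult_left_mono) auto
  finally show "p\<^sup>2 \<le> (r * Y)\<^sup>2" by (simp add: power_mult_distrib)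
  show "0 \<le> r * Y" using assms by simp
qed

lemma mult_le_sq_mult:
  fixes a b r X Y :: real
  assumes "0 \<le> a" "a \<le> r * X" "0 \<le> b" "b \<le> r * Y"
  shows "a * b \<le> r\<^sup>2 * (X * Y)"
proof -
  have "a * b \<le> (r * X) * (r * Y)" using assms by (intro mult_mono) auto
  then show ?thesis by (simp add: power2_eq_square algebra_simps)
qed

text \<open>In the next lemmas U = m |u|, V = sqrt a |v|, T = |theta| and F1 = m |f1|, F2 = sqrt a |f2|,
  F3 = |f3| are the normalized state and data of one mode, with a = 1 + gamma m^tau, w = sqrt a and
  s = sqrt a / m; X and Y are the H-norms of data and state, and r bounds every component relative
  to them.\<close>

lemma theta_bound_of_dissipation:
  fixes alpha beta kappa K r U V T F1 F2 F3 X Y m w :: real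
  defines "c \<equiv> K * (2 * beta + alpha) / (alpha * kappa)"
  assumes pos: "0 < alpha" "0 < beta" "0 < kappa" "0 \<le> K"
    and nonneg: "0 \<le> U" "0 \<le> V" "0 \<le> T" "0 \<le> F1" "0 \<le> F2" "0 \<le> F3"
    and data: "F1 \<le> r * X" "F2 \<le> r * X" "F3 \<le> r * X"
    and state: "U \<le> r * Y" "V \<le> r * Y" "T \<le> r * Y"
    and scale: "1 \<le> K * m" "w\<^sup>2 \<le> K * m"
    and dissipation: "alpha * kappa * m * T\<^sup>2 \<le> beta * (F1 * U) + beta * (F2 * V) + alpha * (F3 * T)"
  shows "T\<^sup>2 \<le> c * (r\<^sup>2 * (X * Y))" and "(w * T)\<^sup>2 \<le> c * (r\<^sup>2 * (X * Y))"
proof -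
  define P where "P = r\<^sup>2 * (X * Y)"
  have "beta * (F1 * U) \<le> beta * P" "beta * (F2 * V) \<le> beta * P" "alpha * (F3 * T) \<le> alpha * P"
    using mult_le_sq_mult[of F1 r X U Y] mult_le_sq_mult[of F2 r X V Y] mult_le_sq_mult[of F3 r X T Y]
      nonneg data state pos
    by (simp_all add: P_def mult_left_mono)
  then have "alpha * kappa * (m * T\<^sup>2) \<le> (2 * beta + alpha) * P"
    using dissipation by (simp add: algebra_simps)
  then have "m * T\<^sup>2 \<le> (2 * beta + alpha) * P / (alpha * kappa)"
    using pos by (simp add: pos_le_divide_eq mult.commute mult.left_commute)
  from mult_left_mono[OF this pos(4)] have mT: "K * (m * T\<^sup>2) \<le> c * P"
    by (simp add: c_def times_divide_eq_right mult.assoc)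
  have "T\<^sup>2 \<le> K * (m * T\<^sup>2)" using mult_right_mono[OF scale(1), of "T\<^sup>2"] by simp
  then show "T\<^sup>2 \<le> c * P" using mT by linarith
  have "(w * T)\<^sup>2 \<le> K * (m * T\<^sup>2)" using mult_right_mono[OF scale(2), of "T\<^sup>2"] by (simp add: power_mult_distrib)
  then show "(w * T)\<^sup>2 \<le> c * P" using mT by linarith
qed

lemma multiplier_bounds:
  fixes alpha beta kappa K r U V T F1 F2 F3 X Y w s Q :: real
  assumes pos: "0 < alpha" "0 < kappa"
    and nonneg: "0 \<le> U" "0 \<le> V" "0 \<le> T" "0 \<le> F1" "0 \<le> F2" "0 \<le> F3" "0 \<le> s"
    and data: "F1 \<le> r * X" "F2 \<le> r * X" "F3 \<le> r * X"
    and state: "U \<le> r * Y" "V \<le> r * Y" "T \<le> r * Y"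
    and "s \<le> K" "T \<le> Q" "w * T \<le> Q"
    and multiplier_v: "beta * V\<^sup>2 \<le> s * (F3 * V) + kappa * (w * T) * V + s * (T * F2) + T * U + alpha * T\<^sup>2"
    and multiplier_u: "U\<^sup>2 \<le> V\<^sup>2 + s * (F2 * U) + s * (V * F1) + alpha * (T * U)"
  shows "U\<^sup>2 \<le> V\<^sup>2 + 2 * K * (r\<^sup>2 * (X * Y)) + alpha * Q * U"
    and "beta * V\<^sup>2 \<le> 2 * K * (r\<^sup>2 * (X * Y)) + kappa * Q * V + Q * U + alpha * T\<^sup>2"
proof -
  have sP: "s * (a * b) \<le> K * (r\<^sup>2 * (X * Y))" if "0 \<le> a" "a \<le> r * X" "0 \<le> b" "b \<le> r * Y" for a b
    using mult_le_sq_mult[OF that] \<open>s \<le> K\<close> nonneg that by (simp add: mult_mono)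
  have "s * (F2 * U) \<le> K * (r\<^sup>2 * (X * Y))" "s * (V * F1) \<le> K * (r\<^sup>2 * (X * Y))"
    "s * (F3 * V) \<le> K * (r\<^sup>2 * (X * Y))" "s * (T * F2) \<le> K * (r\<^sup>2 * (X * Y))"
    using sP[of F2 U] sP[of F1 V] sP[of F3 V] sP[of F2 T] nonneg data state by (simp_all add: mult.commute)
  moreover have "alpha * (T * U) \<le> alpha * Q * U" "T * U \<le> Q * U" "kappa * (w * T) * V \<le> kappa * Q * V"
    using \<open>T \<le> Q\<close> \<open>w * T \<le> Q\<close> nonneg pos by (simp_all add: mult_right_mono)
  ultimately show "U\<^sup>2 \<le> V\<^sup>2 + 2 * K * (r\<^sup>2 * (X * Y)) + alpha * Q * U"
    and "beta * V\<^sup>2 \<le> 2 * K * (r\<^sup>2 * (X * Y)) + kappa * Q * V + Q * U + alpha * T\<^sup>2"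
    using multiplier_u multiplier_v by linarith+
qed

definition mode_constant :: "real \<Rightarrow> real \<Rightarrow> real \<Rightarrow> real \<Rightarrow> real \<Rightarrow> real" where
  "mode_constant alpha beta kappa K r =
    (let c = K * (2 * beta + alpha) / (alpha * kappa)
     in 2 * (r\<^sup>2 * (4 * K + 2 * beta * K + 3 * alpha * c)) + (r\<^sup>2 * sqrt c * (2 * kappa + 2 + alpha * beta))\<^sup>2)"

lemma mode_constant_nonneg:
  assumes "0 < alpha" "0 < beta" "0 < kappa" "0 \<le> K"
  shows "0 \<le> mode_constant alpha beta kappa K r"
  using assms by (simp add: mode_constant_def Let_def)

lemma mode_energy_estimate:
  fixes alpha beta kappa K r U V T F1 F2 F3 X Y m w s :: real
  assumes pos: "0 < alpha" "0 < beta" "0 < kappa"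
    and nonneg: "0 \<le> U" "0 \<le> V" "0 \<le> T" "0 \<le> F1" "0 \<le> F2" "0 \<le> F3"
      "0 \<le> X" "0 \<le> Y" "0 \<le> r" "0 \<le> w" "0 \<le> s"
    and data: "F1 \<le> r * X" "F2 \<le> r * X" "F3 \<le> r * X"
    and state: "U \<le> r * Y" "V \<le> r * Y" "T \<le> r * Y"
    and norm: "Y\<^sup>2 \<le> beta * U\<^sup>2 + beta * V\<^sup>2 + alpha * T\<^sup>2"
    and scale: "1 \<le> K * m" "w\<^sup>2 \<le> K * m" "s \<le> K"
    and dissipation: "alpha * kappa * m * T\<^sup>2 \<le> beta * (F1 * U) + beta * (F2 * V) + alpha * (F3 * T)"
    and multiplier_v: "beta * V\<^sup>2 \<le> s * (F3 * V) + kappa * (w * T) * V + s * (T * F2) + T * U + alpha * T\<^sup>2"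
    and multiplier_u: "U\<^sup>2 \<le> V\<^sup>2 + s * (F2 * U) + s * (V * F1) + alpha * (T * U)"
  shows "Y \<le> mode_constant alpha beta kappa K r * X"
proof -
  define c where "c = K * (2 * beta + alpha) / (alpha * kappa)"
  define A where "A = r\<^sup>2 * (4 * K + 2 * beta * K + 3 * alpha * c)"
  define B where "B = r\<^sup>2 * sqrt c * (2 * kappa + 2 + alpha * beta)"
  define P where "P = r\<^sup>2 * (X * Y)"
  define Q where "Q = sqrt (c * P)"
  have K: "0 \<le> K" using nonneg scale by simp
  then have c: "0 \<le> c" using pos by (simp add: c_def)
  note theta = theta_bound_of_dissipation[OF pos K nonneg(1-6) data state scale(1,2) dissipation,
      folded c_def P_def]
  have "T \<le> Q" "w * T \<le> Q" using theta by (auto simp: Q_def intro: real_le_rsqrt)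
  have U2: "U\<^sup>2 \<le> V\<^sup>2 + 2 * K * P + alpha * Q * U"
    and "beta * V\<^sup>2 \<le> 2 * K * P + kappa * Q * V + Q * U + alpha * T\<^sup>2"
    using multiplier_bounds[OF pos(1,3) nonneg(1-6,11) data state scale(3) \<open>T \<le> Q\<close> \<open>w * T \<le> Q\<close>
        multiplier_v multiplier_u]
    by (simp_all add: P_def)
  moreover have "alpha * T\<^sup>2 \<le> alpha * c * P"
    using theta(1) pos by simp
  moreover have "beta * U\<^sup>2 \<le> beta * V\<^sup>2 + 2 * beta * K * P + alpha * beta * Q * U"
    using mult_left_mono[OF U2, of beta] pos by (simp add: algebra_simps)
  ultimately have "Y\<^sup>2 \<le> (4 * K + 2 * beta * K + 3 * alpha * c) * P + (2 * kappa * V + (2 + alpha * beta) * U) * Q"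
    using norm by (simp add: algebra_simps)
  also have "\<dots> \<le> A * (X * Y) + B * sqrt (X * Y) * Y"
  proof -
    have "2 * kappa * V + (2 + alpha * beta) * U \<le> (2 * kappa + 2 + alpha * beta) * (r * Y)"
      using state nonneg pos by (simp add: algebra_simps add_mono mult_left_mono)
    moreover have "Q = r * sqrt c * sqrt (X * Y)"
      using nonneg by (simp add: Q_def P_def real_sqrt_mult)
    ultimately have "(2 * kappa * V + (2 + alpha * beta) * U) * Q \<le> B * sqrt (X * Y) * Y"
      using c nonneg pos mult_right_mono[of _ _ "r * sqrt c * sqrt (X * Y)"]
      by (fastforce simp: B_def power2_eq_square algebra_simps)
    then show ?thesis by (simp add: A_def P_def)
  qed
  finally have "Y\<^sup>2 \<le> A * (X * Y) + B * sqrt (X * Y) * Y" .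
  moreover have "0 \<le> A" using K pos c by (simp add: A_def)
  ultimately have "Y \<le> (2 * A + B\<^sup>2) * X" using le_of_sq_le_absorb nonneg by blast
  then show ?thesis by (simp add: mode_constant_def Let_def A_def B_def c_def)
qed

lemma mode_energy_identities:
  fixes alpha beta kappa m a lam :: real and u v th f1 f2 f3 :: complex
  assumes a: "0 < a" and m: "0 < m"
    and f1: "f1 = \<i> * of_real lam * u - v"
    and f2: "f2 = \<i> * of_real lam * v - (- of_real (m\<^sup>2) * u + of_real (alpha * m) * th) / of_real a"
    and f3: "f3 = \<i> * of_real lam * th - (- of_real (kappa * m) * th - of_real (beta * m) * v)"
  shows "Re (of_real (beta * m\<^sup>2) * f1 * cnj u + of_real (beta * a) * f2 * cnj v + of_real alpha * f3 * cnj th)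
      = alpha * kappa * m * (cmod th)\<^sup>2"
    and "Re (of_real (a / m) * f3 * cnj v - of_real (kappa * a) * th * cnj v
      + of_real (a / m) * th * cnj f2 - of_real m * th * cnj u + of_real alpha * th * cnj th)
      = beta * a * (cmod v)\<^sup>2"
    and "Re (of_real a * f2 * cnj u + of_real a * v * cnj f1 + of_real (alpha * m) * th * cnj u)
      = m\<^sup>2 * (cmod u)\<^sup>2 - a * (cmod v)\<^sup>2"
  using a m unfolding f1 f2 f3
  by (cases u; cases v; cases th; simp add: cmod_power2 field_simps; simp add: algebra_simps power2_eq_square)+

lemma mode_energy_inequalities:
  fixes alpha beta kappa m a lam :: real and u v th f1 f2 f3 :: complex
  assumes pos: "0 < alpha" "0 < beta" "0 < kappa" and a: "0 < a" and m: "0 < m"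
    and f1: "f1 = \<i> * of_real lam * u - v"
    and f2: "f2 = \<i> * of_real lam * v - (- of_real (m\<^sup>2) * u + of_real (alpha * m) * th) / of_real a"
    and f3: "f3 = \<i> * of_real lam * th - (- of_real (kappa * m) * th - of_real (beta * m) * v)"
  shows "alpha * kappa * m * (cmod th)\<^sup>2 \<le> beta * ((m * cmod f1) * (m * cmod u))
      + beta * ((sqrt a * cmod f2) * (sqrt a * cmod v)) + alpha * (cmod f3 * cmod th)"
    and "beta * (sqrt a * cmod v)\<^sup>2 \<le> (sqrt a / m) * (cmod f3 * (sqrt a * cmod v))
      + kappa * (sqrt a * cmod th) * (sqrt a * cmod v) + (sqrt a / m) * (cmod th * (sqrt a * cmod f2))
      + cmod th * (m * cmod u) + alpha * (cmod th)\<^sup>2"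
    and "(m * cmod u)\<^sup>2 \<le> (sqrt a * cmod v)\<^sup>2 + (sqrt a / m) * ((sqrt a * cmod f2) * (m * cmod u))
      + (sqrt a / m) * ((sqrt a * cmod v) * (m * cmod f1)) + alpha * (cmod th * (m * cmod u))"
proof -
  note identities = mode_energy_identities[OF a m f1 f2 f3]
  have sa: "sqrt a * (sqrt a * x) = a * x" for x
    using a by (simp flip: mult.assoc)
  have Re3: "Re (A + B + C) \<le> cmod A + cmod B + cmod C" for A B C :: complex
    by (simp only: plus_complex.sel) (intro add_mono complex_Re_le_cmod)
  have Re5: "Re (A - B + C - D + E) \<le> cmod A + cmod B + cmod C + cmod D + cmod E" for A B C D E :: complex
    using complex_Re_le_cmod[of A] complex_Re_le_cmod[of "- B"] complex_Re_le_cmod[of C]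
      complex_Re_le_cmod[of "- D"] complex_Re_le_cmod[of E]
    by (simp only: plus_complex.sel minus_complex.sel uminus_complex.sel norm_minus_cancel)
  have "alpha * kappa * m * (cmod th)\<^sup>2 \<le> beta * m\<^sup>2 * cmod f1 * cmod u + beta * a * cmod f2 * cmod v
      + alpha * cmod f3 * cmod th"
    using Re3[of "of_real (beta * m\<^sup>2) * f1 * cnj u" "of_real (beta * a) * f2 * cnj v" "of_real alpha * f3 * cnj th"]
      pos a unfolding identities(1) by (simp add: norm_mult norm_power abs_mult)
  then show "alpha * kappa * m * (cmod th)\<^sup>2 \<le> beta * ((m * cmod f1) * (m * cmod u))
      + beta * ((sqrt a * cmod f2) * (sqrt a * cmod v)) + alpha * (cmod f3 * cmod th)"
    by (simp add: algebra_simps power2_eq_square sa)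
  have "beta * a * (cmod v)\<^sup>2 \<le> a / m * cmod f3 * cmod v + kappa * a * cmod th * cmod v
      + a / m * cmod th * cmod f2 + m * cmod th * cmod u + alpha * cmod th * cmod th"
    using Re5[of "of_real (a / m) * f3 * cnj v" "of_real (kappa * a) * th * cnj v" "of_real (a / m) * th * cnj f2"
      "of_real m * th * cnj u" "of_real alpha * th * cnj th"]
      pos a m unfolding identities(2) by (simp add: norm_mult norm_divide abs_mult)
  then show "beta * (sqrt a * cmod v)\<^sup>2 \<le> (sqrt a / m) * (cmod f3 * (sqrt a * cmod v))
      + kappa * (sqrt a * cmod th) * (sqrt a * cmod v) + (sqrt a / m) * (cmod th * (sqrt a * cmod f2))
      + cmod th * (m * cmod u) + alpha * (cmod th)\<^sup>2"
    by (simp add: algebra_simps power2_eq_square sa)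
  have "m\<^sup>2 * (cmod u)\<^sup>2 - a * (cmod v)\<^sup>2 \<le> a * cmod f2 * cmod u + a * cmod v * cmod f1
      + alpha * m * cmod th * cmod u"
    using Re3[of "of_real a * f2 * cnj u" "of_real a * v * cnj f1" "of_real (alpha * m) * th * cnj u"]
      pos a m unfolding identities(3) by (simp add: norm_mult abs_mult)
  then show "(m * cmod u)\<^sup>2 \<le> (sqrt a * cmod v)\<^sup>2 + (sqrt a / m) * ((sqrt a * cmod f2) * (m * cmod u))
      + (sqrt a / m) * ((sqrt a * cmod v) * (m * cmod f1)) + alpha * (cmod th * (m * cmod u))"
    using m by (simp add: algebra_simps power2_eq_square sa)
qed

lemma eigenvalue_scaling:
  fixes m0 m gamma tau :: real
  assumes "0 < m0" "m0 \<le> m" "0 \<le> gamma" "0 \<le> tau" "tau \<le> 1"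
  defines "K \<equiv> (1 + gamma) / m0 + gamma"
  shows "1 \<le> K * m" and "1 + gamma * m powr tau \<le> K * m" and "sqrt (1 + gamma * m powr tau) / m \<le> K"
proof -
  have m: "0 < m" using assms by linarith
  have "m powr tau \<le> 1 + m"
  proof (cases "m \<le> 1")
    case True
    then have "m powr tau \<le> 1" using assms m by (intro powr_le1) auto
    then show ?thesis using m by simp
  next
    case False
    then have "m powr tau \<le> m powr 1" using assms by (intro powr_mono) auto
    then show ?thesis using m by simp
  qed
  then have "1 + gamma * m powr tau \<le> 1 + gamma * (1 + m)"
    using assms by (simp add: mult_left_mono)
  also have "\<dots> = (1 + gamma) * 1 + gamma * m"
    by (simp add: algebra_simps)
  also have "\<dots> \<le> (1 + gamma) * (m / m0) + gamma * m"
    using assms by (intro add_right_mono mult_left_mono) auto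
  also have "\<dots> = K * m"
    by (simp add: K_def algebra_simps)
  finally show a: "1 + gamma * m powr tau \<le> K * m" .
  moreover have "1 \<le> 1 + gamma * m powr tau" using assms by simp
  ultimately show K1: "1 \<le> K * m" by linarith
  have "K * m \<le> (K * m)\<^sup>2"
    using mult_left_mono[OF K1, of "K * m"] K1 by (simp add: power2_eq_square)
  then have "sqrt (1 + gamma * m powr tau) \<le> sqrt ((K * m)\<^sup>2)"
    using a by (intro real_sqrt_le_mono) linarith
  then show "sqrt (1 + gamma * m powr tau) / m \<le> K"
    using K1 m by (simp add: divide_le_eq)
qed

lemma Hterm_eq:
  assumes "0 \<le> gamma"
  shows "Hterm mu alpha beta gamma tau (u, v, th) k
    = beta * (mu k * cmod (u k))\<^sup>2 + beta * (sqrt (1 + gamma * mu k powr tau) * cmod (v k))\<^sup>2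
      + alpha * (cmod (th k))\<^sup>2"
  using assms by (simp add: Hterm_def power_mult_distrib algebra_simps)

lemma shifted_eq:
  "shifted mu alpha beta gamma kappa tau z (u, v, th) =
    (\<lambda>k. z * u k - v k,
     \<lambda>k. z * v k - (- of_real ((mu k)\<^sup>2) * u k + of_real (alpha * mu k) * th k) / of_real (1 + gamma * mu k powr tau),
     \<lambda>k. z * th k - (- of_real (kappa * mu k) * th k - of_real (beta * mu k) * v k))"
  by (simp add: shifted_def st_diff_def st_scale_def Bop_def)

lemma Hterm_nonneg:
  assumes "0 \<le> alpha" "0 \<le> beta" "0 \<le> gamma"
  shows "0 \<le> Hterm mu alpha beta gamma tau U k"
  using assms by (cases U) (simp add: Hterm_def)

lemma mode_resolvent_estimate:
  fixes alpha beta gamma kappa tau m0 m l :: real and u v th :: complex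
  assumes pos: "0 < alpha" "0 < beta" "0 < gamma" "0 < kappa" and tau: "0 \<le> tau" "tau \<le> 1"
    and m0: "0 < m0" "m0 \<le> m"
  defines "a \<equiv> 1 + gamma * m powr tau"
  defines "f1 \<equiv> \<i> * of_real l * u - v"
    and "f2 \<equiv> \<i> * of_real l * v - (- of_real (m\<^sup>2) * u + of_real (alpha * m) * th) / of_real a"
    and "f3 \<equiv> \<i> * of_real l * th - (- of_real (kappa * m) * th - of_real (beta * m) * v)"
  defines "C \<equiv> mode_constant alpha beta kappa ((1 + gamma) / m0 + gamma) (1 / sqrt (min alpha beta))"
  shows "beta * (m * cmod u)\<^sup>2 + beta * (sqrt a * cmod v)\<^sup>2 + alpha * (cmod th)\<^sup>2
    \<le> C\<^sup>2 * (beta * (m * cmod f1)\<^sup>2 + beta * (sqrt a * cmod f2)\<^sup>2 + alpha * (cmod f3)\<^sup>2)"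
proof -
  define r where "r = 1 / sqrt (min alpha beta)"
  define X where "X = sqrt (beta * (m * cmod f1)\<^sup>2 + beta * (sqrt a * cmod f2)\<^sup>2 + alpha * (cmod f3)\<^sup>2)"
  define Y where "Y = sqrt (beta * (m * cmod u)\<^sup>2 + beta * (sqrt a * cmod v)\<^sup>2 + alpha * (cmod th)\<^sup>2)"
  have m: "0 < m" using m0 by linarith
  have a: "0 < a" using pos by (simp add: a_def add_pos_nonneg)
  have r: "0 \<le> r" "1 \<le> alpha * r\<^sup>2" "1 \<le> beta * r\<^sup>2"
    using pos by (auto simp: r_def power_divide min_def)
  have XY: "0 \<le> X" "0 \<le> Y" and X2: "X\<^sup>2 = beta * (m * cmod f1)\<^sup>2 + beta * (sqrt a * cmod f2)\<^sup>2 + alpha * (cmod f3)\<^sup>2"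
    and Y2: "Y\<^sup>2 = beta * (m * cmod u)\<^sup>2 + beta * (sqrt a * cmod v)\<^sup>2 + alpha * (cmod th)\<^sup>2"
    using pos by (simp_all add: X_def Y_def)
  have data: "m * cmod f1 \<le> r * X" "sqrt a * cmod f2 \<le> r * X" "cmod f3 \<le> r * X"
    using le_mult_of_weighted_sq_le[where c = beta and r = r and Y = X]
      le_mult_of_weighted_sq_le[where c = alpha and r = r and Y = X] X2 XY r pos
    by simp_all
  have state: "m * cmod u \<le> r * Y" "sqrt a * cmod v \<le> r * Y" "cmod th \<le> r * Y"
    using le_mult_of_weighted_sq_le[where c = beta and r = r and Y = Y]
      le_mult_of_weighted_sq_le[where c = alpha and r = r and Y = Y] Y2 XY r pos
    by simp_all
  note scale = eigenvalue_scaling[OF m0 less_imp_le[OF pos(3)] tau, folded a_def]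
  have "Y \<le> C * X"
    unfolding C_def r_def[symmetric]
    by (rule mode_energy_estimate[OF pos(1,2,4) _ _ _ _ _ _ XY r(1) _ _ data state eq_refl[OF Y2] _ _ _
          mode_energy_inequalities[OF pos(1,2,4) a m f1_def[THEN meta_eq_to_obj_eq]
            f2_def[THEN meta_eq_to_obj_eq] f3_def[THEN meta_eq_to_obj_eq]]])
      (use m a scale in simp_all)
  then have "Y\<^sup>2 \<le> (C * X)\<^sup>2"
    using XY by (intro power_mono) simp_all
  then show ?thesis
    using X2 Y2 by (simp add: power_mult_distrib)
qed

lemma Hterm_le_shifted:
  assumes "eigen_seq mu" and pos: "0 < alpha" "0 < beta" "0 < gamma" "0 < kappa" and tau: "0 \<le> tau" "tau \<le> 1"
  obtains C where "0 \<le> C" and "\<And>U k l. Hterm mu alpha beta gamma tau U k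
    \<le> C\<^sup>2 * Hterm mu alpha beta gamma tau (shifted mu alpha beta gamma kappa tau (\<i> * of_real l) U) k"
proof
  have m0: "0 < mu 0" and "mono mu" using assms(1) by (auto simp: eigen_seq_def)
  define C where "C = mode_constant alpha beta kappa ((1 + gamma) / mu 0 + gamma) (1 / sqrt (min alpha beta))"
  show "0 \<le> C" using pos m0 by (simp add: C_def mode_constant_nonneg)
  fix U :: state and k :: nat and l :: real
  obtain u v th where "U = (u, v, th)" by (cases U)
  moreover have "mu 0 \<le> mu k" using \<open>mono mu\<close> by (simp add: monoD)
  ultimately show "Hterm mu alpha beta gamma tau U k
    \<le> C\<^sup>2 * Hterm mu alpha beta gamma tau (shifted mu alpha beta gamma kappa tau (\<i> * of_real l) U) k"
    using mode_resolvent_estimate[OF pos tau m0, where m = "mu k" and l = l and u = "u k" and v = "v k" and th = "th k"] pos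
    by (simp add: C_def shifted_eq Hterm_eq)
qed

lemma summable_Hterm:
  assumes "inH mu alpha beta gamma tau F"
  shows "summable (Hterm mu alpha beta gamma tau F)"
proof -
  obtain f1 f2 f3 where F: "F = (f1, f2, f3)" by (cases F)
  have "Hterm mu alpha beta gamma tau F = (\<lambda>k. beta * ((mu k)\<^sup>2 * (cmod (f1 k))\<^sup>2)
      + (beta * (cmod (f2 k))\<^sup>2 + (beta * gamma) * ((mu k) powr tau * (cmod (f2 k))\<^sup>2)) + alpha * (cmod (f3 k))\<^sup>2)"
    by (auto simp: Hterm_def F algebra_simps)
  then show ?thesis
    using assms by (simp add: inH_def F summable_add summable_mult)
qed

lemma Hnorm_nonneg:
  assumes "inH mu alpha beta gamma tau F" "0 \<le> alpha" "0 \<le> beta" "0 \<le> gamma"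
  shows "0 \<le> Hnorm mu alpha beta gamma tau F"
  using assms by (simp add: Hnorm_def suminf_nonneg summable_Hterm Hterm_nonneg)

lemma Hnorm_le_of_Hterm_le:
  assumes "inH mu alpha beta gamma tau U" "inH mu alpha beta gamma tau F" "0 \<le> C"
    and "\<And>k. Hterm mu alpha beta gamma tau U k \<le> C\<^sup>2 * Hterm mu alpha beta gamma tau F k"
  shows "Hnorm mu alpha beta gamma tau U \<le> C * Hnorm mu alpha beta gamma tau F"
proof -
  have "(\<Sum>k. Hterm mu alpha beta gamma tau U k) \<le> (\<Sum>k. C\<^sup>2 * Hterm mu alpha beta gamma tau F k)"
    using assms by (intro suminf_le summable_mult summable_Hterm) auto
  also have "\<dots> = C\<^sup>2 * (\<Sum>k. Hterm mu alpha beta gamma tau F k)"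
    using assms by (intro suminf_mult summable_Hterm)
  finally have "sqrt (\<Sum>k. Hterm mu alpha beta gamma tau U k) \<le> sqrt (C\<^sup>2 * (\<Sum>k. Hterm mu alpha beta gamma tau F k))"
    by (rule real_sqrt_le_mono)
  then show ?thesis
    using assms(3) by (simp add: Hnorm_def real_sqrt_mult)
qed

lemma resolvent_norm_le_of_Hterm_le:
  assumes "z \<in> resolvent_set mu alpha beta gamma kappa tau" "0 \<le> alpha" "0 \<le> beta" "0 \<le> gamma" "0 \<le> C"
    and "\<And>U k. Hterm mu alpha beta gamma tau U k
      \<le> C\<^sup>2 * Hterm mu alpha beta gamma tau (shifted mu alpha beta gamma kappa tau z U) k"
  shows "resolvent_norm mu alpha beta gamma kappa tau z \<le> ereal C"
  unfolding resolvent_norm_def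
proof (rule SUP_least)
  fix F assume F: "F \<in> {F. inH mu alpha beta gamma tau F \<and> Hnorm mu alpha beta gamma tau F \<noteq> 0}"
  have bij: "bij_betw (shifted mu alpha beta gamma kappa tau z) (domB mu alpha beta gamma kappa tau)
      {F. inH mu alpha beta gamma tau F}"
    using assms(1) by (simp add: resolvent_set_def)
  define U where "U = resolvent mu alpha beta gamma kappa tau z F"
  have "U \<in> domB mu alpha beta gamma kappa tau" and "shifted mu alpha beta gamma kappa tau z U = F"
    using F bij_betw_the_inv_into[OF bij] f_the_inv_into_f_bij_betw[OF bij]
    by (auto simp: U_def resolvent_def bij_betw_def)
  then have "Hnorm mu alpha beta gamma tau U \<le> C * Hnorm mu alpha beta gamma tau F"
    using F assms by (intro Hnorm_le_of_Hterm_le) (auto simp: domB_def)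
  moreover have "0 < Hnorm mu alpha beta gamma tau F"
    using F Hnorm_nonneg[of mu alpha beta gamma tau F] assms by force
  ultimately show "ereal (Hnorm mu alpha beta gamma tau (resolvent mu alpha beta gamma kappa tau z F)
      / Hnorm mu alpha beta gamma tau F) \<le> ereal C"
    by (simp add: U_def[symmetric] divide_le_eq)
qed

theorem lemma4:
  fixes mu :: "nat \<Rightarrow> real" and alpha beta gamma kappa tau :: real
  assumes "eigen_seq mu"
    and "alpha > 0" and "beta > 0" and "gamma > 0" and "kappa > 0"
    and "0 \<le> tau" and "tau \<le> 1"
  shows "Limsup (inf at_infinity (principal {l::real. \<i> * of_real l \<in> resolvent_set mu alpha beta gamma kappa tau}))
           (\<lambda>l. resolvent_norm mu alpha beta gamma kappa tau (\<i> * of_real l)) < \<infinity>"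
proof -
  obtain C where "0 \<le> C" and C: "\<And>U k l. Hterm mu alpha beta gamma tau U k
    \<le> C\<^sup>2 * Hterm mu alpha beta gamma tau (shifted mu alpha beta gamma kappa tau (\<i> * of_real l) U) k"
    using Hterm_le_shifted[OF assms] by blast
  have "Limsup (inf at_infinity (principal {l::real. \<i> * of_real l \<in> resolvent_set mu alpha beta gamma kappa tau}))
      (\<lambda>l. resolvent_norm mu alpha beta gamma kappa tau (\<i> * of_real l)) \<le> ereal C"
  proof (rule Limsup_bounded)
    have "resolvent_norm mu alpha beta gamma kappa tau (\<i> * of_real l) \<le> ereal C"
      if "\<i> * of_real l \<in> resolvent_set mu alpha beta gamma kappa tau" for l
      using that assms \<open>0 \<le> C\<close> C by (intro resolvent_norm_le_of_Hterm_le) auto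
    then show "\<forall>\<^sub>F l in inf at_infinity (principal {l. \<i> * of_real l \<in> resolvent_set mu alpha beta gamma kappa tau}).
        resolvent_norm mu alpha beta gamma kappa tau (\<i> * of_real l) \<le> ereal C"
      by (simp add: eventually_inf_principal)
  qed
  then show ?thesis
    using le_less_trans by fastforce
qed

end
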